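(* Let $1\le p<\infty$, $X\subset L^p_+(\mathbb{R}^n)$, let $T:\mathcal V(\mathbb{R}^n)\to\mathcal V(\mathbb{R}^n)$ be a rearrangement and let $\mathcal W$ be a family of rearrangements from $\mathcal V(\mathbb{R}^n)$ to $\mathcal V(\mathbb{R}^n)$. Then $T$ is weakly approximable in $L^p$ on $X$ by maps in $\mathcal W$ if and only if $T$ is weakly approximable in $L^p$ on the $L^p$-closure of $X$ by maps in $\mathcal W$. The same equivalence holds with "weakly approximable" replaced throughout by "approximable" or by "sequentially approximable".
   Context: $\mathcal V(\mathbb{R}^n)$: nonnegative measurable $f$ on $\mathbb{R}^n$ with $\mathcal H^n(\{f>t\})<\infty$ for all $t>0$; $L^p_+(\mathbb{R}^n)$: nonnegative functions in $L^p$. A rearrangement is an equimeasurable ($\mathcal H^n(\{Tf>t\})=\mathcal H^n(\{f>t\})$ for all $t$) and monotonic ($f\le g$ a.e. implies $Tf\le Tg$ a.e.) map. $T$ is approximable in $L^p$ on $X$ by $\mathcal W$ if there are $T_k\in\mathcal W$ with $\|T_kf-Tf\|_p\to0$ for all $f\in X$; weakly approximable if the $T_k$ may depend on $f$; sequentially approximable if $T_k=S_k\circ\cdots\circ S_1$ for a fixed sequence $(S_k)$ in $\mathcal W$. *)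

theory Defs
  imports "HOL-Analysis.Analysis"
begin

definition V_class :: "('a::euclidean_space \<Rightarrow> real) set" where
  "V_class = {f. f \<in> borel_measurable lebesgue \<and> (\<forall>x. 0 \<le> f x) \<and>
      (\<forall>t>0. emeasure lebesgue {x. f x > t} < \<infinity>)}"

definition lp_norm :: "real \<Rightarrow> ('a::euclidean_space \<Rightarrow> real) \<Rightarrow> ennreal" where
  "lp_norm p f =
     (let I = (\<integral>\<^sup>+ x. ennreal (\<bar>f x\<bar> powr p) \<partial>lebesgue)
      in if I = \<infinity> then \<infinity> else ennreal ((enn2real I) powr (1 / p)))"

definition Lp_plus :: "real \<Rightarrow> ('a::euclidean_space \<Rightarrow> real) set" where
  "Lp_plus p = {f. f \<in> borel_measurable lebesgue \<and> (\<forall>x. 0 \<le> f x) \<and> lp_norm p f < \<infinity>}"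

text \<open>The L^p-closure of a set of nonnegative L^p functions, taken inside L^p_+
  (which is closed in L^p), as a set of representatives.\<close>
definition Lp_closure :: "real \<Rightarrow> ('a::euclidean_space \<Rightarrow> real) set \<Rightarrow> ('a \<Rightarrow> real) set" where
  "Lp_closure p X = {f \<in> Lp_plus p. \<exists>g::nat \<Rightarrow> 'a \<Rightarrow> real. (\<forall>k. g k \<in> X) \<and>
      ((\<lambda>k. lp_norm p (\<lambda>x. g k x - f x)) \<longlongrightarrow> 0) sequentially}"

definition rearrangement :: "(('a::euclidean_space \<Rightarrow> real) \<Rightarrow> ('a \<Rightarrow> real)) \<Rightarrow> bool" where
  "rearrangement T \<longleftrightarrow>
     (\<forall>f\<in>V_class. T f \<in> V_class) \<and>
     (\<forall>f\<in>V_class. \<forall>t::real. emeasure lebesgue {x. T f x > t} = emeasure lebesgue {x. f x > t}) \<and>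
     (\<forall>f\<in>V_class. \<forall>g\<in>V_class. (AE x in lebesgue. f x \<le> g x) \<longrightarrow>
        (AE x in lebesgue. T f x \<le> T g x))"

definition approximable ::
  "real \<Rightarrow> ('a::euclidean_space \<Rightarrow> real) set \<Rightarrow> (('a \<Rightarrow> real) \<Rightarrow> ('a \<Rightarrow> real)) set
     \<Rightarrow> (('a \<Rightarrow> real) \<Rightarrow> ('a \<Rightarrow> real)) \<Rightarrow> bool" where
  "approximable p X W T \<longleftrightarrow>
     (\<exists>Tk::nat \<Rightarrow> ('a \<Rightarrow> real) \<Rightarrow> ('a \<Rightarrow> real). (\<forall>k. Tk k \<in> W) \<and>
        (\<forall>f\<in>X. ((\<lambda>k. lp_norm p (\<lambda>x. Tk k f x - T f x)) \<longlongrightarrow> 0) sequentially))"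

definition weakly_approximable ::
  "real \<Rightarrow> ('a::euclidean_space \<Rightarrow> real) set \<Rightarrow> (('a \<Rightarrow> real) \<Rightarrow> ('a \<Rightarrow> real)) set
     \<Rightarrow> (('a \<Rightarrow> real) \<Rightarrow> ('a \<Rightarrow> real)) \<Rightarrow> bool" where
  "weakly_approximable p X W T \<longleftrightarrow>
     (\<forall>f\<in>X. \<exists>Tk::nat \<Rightarrow> ('a \<Rightarrow> real) \<Rightarrow> ('a \<Rightarrow> real). (\<forall>k. Tk k \<in> W) \<and>
        ((\<lambda>k. lp_norm p (\<lambda>x. Tk k f x - T f x)) \<longlongrightarrow> 0) sequentially)"

fun comp_upto :: "(nat \<Rightarrow> 'b \<Rightarrow> 'b) \<Rightarrow> nat \<Rightarrow> 'b \<Rightarrow> 'b" where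
  "comp_upto S 0 = S 0"
| "comp_upto S (Suc k) = S (Suc k) \<circ> comp_upto S k"

definition sequentially_approximable ::
  "real \<Rightarrow> ('a::euclidean_space \<Rightarrow> real) set \<Rightarrow> (('a \<Rightarrow> real) \<Rightarrow> ('a \<Rightarrow> real)) set
     \<Rightarrow> (('a \<Rightarrow> real) \<Rightarrow> ('a \<Rightarrow> real)) \<Rightarrow> bool" where
  "sequentially_approximable p X W T \<longleftrightarrow>
     (\<exists>S::nat \<Rightarrow> ('a \<Rightarrow> real) \<Rightarrow> ('a \<Rightarrow> real). (\<forall>k. S k \<in> W) \<and>
        (\<forall>f\<in>X. ((\<lambda>k. lp_norm p (\<lambda>x. comp_upto S k f x - T f x)) \<longlongrightarrow> 0) sequentially))"

end

(*
  A rearrangement S is monotone and equimeasurable.  Applied to min f g \<le> f, g \<le> max f g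
  this gives |S f - S g| \<le> S (max f g) - S (min f g) a.e.; since (b - a)^p \<le> b^p - a^p and S
  preserves integrals of p-th powers,
    ||S f - S g||_p^p \<le> \<integral> (max f g)^p - (min f g)^p = || f^p - g^p ||_1.
  As f \<mapsto> f^p is continuous from L^p_+ to L^1, going through a nearby g bounds ||R f - T f||_p
  for rearrangements R, T by ||R g - T g||_p plus a term that is small when g is L^p-close to f.
  Hence approximating T at the points g_j of X approximates T at their limit f; for weak
  approximability the approximating maps are picked diagonally.
*)

theory Submission
  imports Defs
begin

lemma powr_diff_le_diff_powr:
  fixes a b p :: real
  assumes "0 \<le> a" "a \<le> b" "1 \<le> p"
  shows "(b - a) powr p \<le> b powr p - a powr p"
proof (cases "b = 0")
  case True
  with assms show ?thesis by simp
next
  case False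
  with assms have b: "0 < b" by simp
  define s where "s = a / b"
  have s: "0 \<le> s" "s \<le> 1" using assms b by (auto simp: s_def)
  have "b - a = b * (1 - s)" "a = b * s" using b by (auto simp: s_def field_simps)
  then have "(b - a) powr p = b powr p * (1 - s) powr p" "a powr p = b powr p * s powr p"
    using s b by (simp_all add: powr_mult)
  moreover have "(1 - s) powr p \<le> 1 - s" "s powr p \<le> s"
    using s assms powr_le_one_le[of "1 - s" p] powr_le_one_le[of s p]
    by (cases "s = 0"; cases "s = 1"; simp)+
  ultimately have "(b - a) powr p + a powr p \<le> b powr p * (1 - s) + b powr p * s"
    by (metis add_mono mult_left_mono powr_ge_zero)
  then show ?thesis by (simp add: algebra_simps)
qed

lemma less_powr_iff_root_less:
  fixes a t p :: real
  assumes "0 \<le> a" "0 < t" "0 < p"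
  shows "t < a powr p \<longleftrightarrow> t powr (1 / p) < a"
proof -
  have "t = (t powr (1 / p)) powr p" using assms by (simp add: powr_powr)
  then show ?thesis
    using assms powr_less_mono2[of p a "t powr (1 / p)"] powr_less_mono2[of p "t powr (1 / p)" a]
    by (metis linorder_not_le order_le_less powr_ge_zero)
qed

lemma abs_powr_diff_le:
  fixes a b d p :: real
  assumes a: "0 \<le> a" and b: "0 \<le> b" and d: "0 < d" "d \<le> 1" and p: "1 \<le> p"
  shows "\<bar>a powr p - b powr p\<bar>
    \<le> ((1 + d) powr p - (1 - d) powr p) * a powr p + (1 + 1 / d) powr p * \<bar>b - a\<bar> powr p"
proof (cases "\<bar>b - a\<bar> \<le> d * a")
  case True
  then have "(1 - d) * a \<le> b" "b \<le> (1 + d) * a" by (auto simp: algebra_simps abs_le_iff)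
  then have "((1 - d) * a) powr p \<le> b powr p" "b powr p \<le> ((1 + d) * a) powr p"
    using a b d p by (auto intro: powr_mono2)
  then have "(1 - d) powr p * a powr p \<le> b powr p" "b powr p \<le> (1 + d) powr p * a powr p"
    using a d by (simp_all add: powr_mult)
  moreover have "(1 - d) powr p * a powr p \<le> a powr p" "a powr p \<le> (1 + d) powr p * a powr p"
  proof -
    have "(1 - d) powr p \<le> 1" "1 \<le> (1 + d) powr p"
      using d p by (auto intro: powr_le1 ge_one_powr_ge_zero)
    then show "(1 - d) powr p * a powr p \<le> a powr p" "a powr p \<le> (1 + d) powr p * a powr p"
      by (simp_all add: mult_left_le_one_le mult_le_cancel_right1)
  qed
  moreover have "0 \<le> (1 + 1 / d) powr p * \<bar>b - a\<bar> powr p" by simp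
  ultimately show ?thesis unfolding left_diff_distrib abs_le_iff by linarith
next
  case False
  define u where "u = \<bar>b - a\<bar>"
  have "a \<le> u / d" using False d by (simp add: u_def field_simps mult.commute)
  then have "a \<le> (1 + 1 / d) * u" "b \<le> (1 + 1 / d) * u"
    using d by (auto simp: u_def algebra_simps)
  then have "a powr p \<le> (1 + 1 / d) powr p * u powr p" "b powr p \<le> (1 + 1 / d) powr p * u powr p"
    using a b d p by (auto simp: u_def powr_mult[symmetric] intro: powr_mono2)
  moreover have "0 \<le> ((1 + d) powr p - (1 - d) powr p) * a powr p"
    using d p by (simp add: powr_mono2)
  ultimately show ?thesis
    unfolding u_def abs_le_iff using powr_ge_zero[of a p] powr_ge_zero[of b p] by linarith
qed

lemma abs_sum3_powr_le:
  fixes a b c p :: real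
  assumes "0 \<le> p"
  shows "\<bar>a + b + c\<bar> powr p \<le> 3 powr p * (\<bar>a\<bar> powr p + \<bar>b\<bar> powr p + \<bar>c\<bar> powr p)"
proof -
  define m where "m = max \<bar>a\<bar> (max \<bar>b\<bar> \<bar>c\<bar>)"
  have "\<bar>a + b + c\<bar> \<le> 3 * m" unfolding m_def by linarith
  then have "\<bar>a + b + c\<bar> powr p \<le> 3 powr p * m powr p"
    using assms by (auto simp: m_def powr_mult[symmetric] intro: powr_mono2)
  moreover have "m powr p \<le> \<bar>a\<bar> powr p + \<bar>b\<bar> powr p + \<bar>c\<bar> powr p"
    unfolding m_def max_def by (simp add: add_increasing add_increasing2)
  ultimately show ?thesis by (meson order.trans mult_left_mono powr_ge_zero)
qed

lemma sigma_finite_lebesgue: "sigma_finite_measure (lebesgue :: 'a::euclidean_space measure)"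
proof -
  obtain A :: "'a set set" where "countable A" "A \<subseteq> sets lborel" "\<Union>A = space lborel"
    "\<forall>a\<in>A. emeasure lborel a \<noteq> \<infinity>"
    using lborel.sigma_finite_countable by blast
  then show ?thesis unfolding sigma_finite_measure_def by (intro exI[of _ A]) auto
qed

lemma nn_integral_layer_cake:
  assumes "sigma_finite_measure M" and [measurable]: "w \<in> borel_measurable M"
    and nonneg: "\<And>x. x \<in> space M \<Longrightarrow> 0 \<le> w x"
  shows "(\<integral>\<^sup>+x. ennreal (w x) \<partial>M) =
    (\<integral>\<^sup>+t. indicator {0<..} t * emeasure M {x\<in>space M. t < w x} \<partial>lborel)"
proof -
  define F where "F x t = (indicator {z. 0 < snd z \<and> snd z < w (fst z)} (x, t) :: ennreal)" for x t
  have "(\<lambda>(x, t). F x t) \<in> borel_measurable (M \<Otimes>\<^sub>M lborel)"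
    unfolding F_def by measurable
  moreover have "pair_sigma_finite M lborel"
    using assms(1) by (intro pair_sigma_finite.intro sigma_finite_lborel)
  ultimately have Fubini: "(\<integral>\<^sup>+x. (\<integral>\<^sup>+t. F x t \<partial>lborel) \<partial>M) = (\<integral>\<^sup>+t. (\<integral>\<^sup>+x. F x t \<partial>M) \<partial>lborel)"
    by (metis (no_types) pair_sigma_finite.Fubini')
  have "(\<integral>\<^sup>+t. F x t \<partial>lborel) = ennreal (w x)" if "x \<in> space M" for x
  proof -
    have "F x = indicator {0<..<w x}" unfolding F_def by (auto simp: indicator_def)
    then show ?thesis using nonneg[OF that] by (simp add: emeasure_lborel_Ioo)
  qed
  moreover have "(\<integral>\<^sup>+x. F x t \<partial>M) = indicator {0<..} t * emeasure M {x\<in>space M. t < w x}" for t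
  proof (cases "0 < t")
    case True
    then have "(\<integral>\<^sup>+x. F x t \<partial>M) = (\<integral>\<^sup>+x. indicator {x\<in>space M. t < w x} x \<partial>M)"
      unfolding F_def by (intro nn_integral_cong) (auto simp: indicator_def)
    with True show ?thesis by simp
  next
    case False
    then show ?thesis unfolding F_def by (simp add: indicator_def)
  qed
  ultimately show ?thesis using Fubini by (simp cong: nn_integral_cong)
qed

lemma nn_integral_powr_eq_if_equimeasurable:
  assumes "sigma_finite_measure M" "0 < p"
    and [measurable]: "u \<in> borel_measurable M" "v \<in> borel_measurable M"
    and nonneg: "\<And>x. x \<in> space M \<Longrightarrow> 0 \<le> u x" "\<And>x. x \<in> space M \<Longrightarrow> 0 \<le> v x"
    and equi: "\<And>t. 0 < t \<Longrightarrow> emeasure M {x\<in>space M. t < u x} = emeasure M {x\<in>space M. t < v x}"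
  shows "(\<integral>\<^sup>+x. ennreal (u x powr p) \<partial>M) = (\<integral>\<^sup>+x. ennreal (v x powr p) \<partial>M)"
proof -
  have "indicator {0<..} t * emeasure M {x\<in>space M. t < u x powr p} =
      indicator {0<..} t * emeasure M {x\<in>space M. t < v x powr p}" for t
  proof (cases "0 < t")
    case True
    then have "{x\<in>space M. t < u x powr p} = {x\<in>space M. t powr (1 / p) < u x}"
      "{x\<in>space M. t < v x powr p} = {x\<in>space M. t powr (1 / p) < v x}"
      using nonneg \<open>0 < p\<close> by (auto simp: less_powr_iff_root_less)
    with True show ?thesis by (simp add: equi)
  qed simp
  then show ?thesis using assms(1) by (simp add: nn_integral_layer_cake)
qed

definition lp_integral :: "real \<Rightarrow> ('a::euclidean_space \<Rightarrow> real) \<Rightarrow> ennreal" where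
  "lp_integral p h = (\<integral>\<^sup>+x. ennreal (\<bar>h x\<bar> powr p) \<partial>lebesgue)"

lemma lp_norm_eq_lp_integral:
  "lp_norm p h =
    (if lp_integral p h = \<infinity> then \<infinity> else ennreal (enn2real (lp_integral p h) powr (1 / p)))"
  by (simp add: lp_norm_def lp_integral_def Let_def)

lemma lp_norm_less_iff:
  assumes "0 < p" "0 < e"
  shows "lp_norm p h < ennreal e \<longleftrightarrow> lp_integral p h < ennreal (e powr p)"
proof (cases "lp_integral p h = \<infinity>")
  case True
  then show ?thesis by (simp add: lp_norm_eq_lp_integral)
next
  case False
  define r where "r = enn2real (lp_integral p h)"
  have r: "lp_integral p h = ennreal r" "0 \<le> r"
    using False by (auto simp: r_def ennreal_enn2real_if)
  then have "lp_norm p h = ennreal (r powr (1 / p))"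
    by (simp add: lp_norm_eq_lp_integral)
  moreover have "r powr (1 / p) < e \<longleftrightarrow> r < e powr p"
  proof (cases "r = 0")
    case True
    with assms show ?thesis by simp
  next
    case False
    with r(2) assms show ?thesis by (simp add: less_powr_iff_root_less)
  qed
  ultimately show ?thesis using r assms by (simp add: ennreal_less_iff)
qed

lemma tendsto_lp_norm_zero_iff:
  assumes "0 < p"
  shows "((\<lambda>k. lp_norm p (h k)) \<longlonglongrightarrow> 0) \<longleftrightarrow> ((\<lambda>k. lp_integral p (h k)) \<longlonglongrightarrow> 0)"
proof
  assume lim: "(\<lambda>k. lp_norm p (h k)) \<longlonglongrightarrow> 0"
  show "(\<lambda>k. lp_integral p (h k)) \<longlonglongrightarrow> 0"
  proof (rule tendsto_zero_ennreal)
    fix e :: real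
    assume e: "0 < e"
    have iff: "lp_norm p g < ennreal (e powr (1 / p)) \<longleftrightarrow> lp_integral p g < ennreal e" for g
      using lp_norm_less_iff[OF assms, of "e powr (1 / p)" g] assms e by (simp add: powr_powr)
    have "\<forall>\<^sub>F k in sequentially. lp_norm p (h k) < ennreal (e powr (1 / p))"
      using e by (intro order_tendstoD(2)[OF lim]) simp
    then show "\<forall>\<^sub>F k in sequentially. lp_integral p (h k) < ennreal e"
      by eventually_elim (simp add: iff)
  qed
next
  assume lim: "(\<lambda>k. lp_integral p (h k)) \<longlonglongrightarrow> 0"
  show "(\<lambda>k. lp_norm p (h k)) \<longlonglongrightarrow> 0"
  proof (rule tendsto_zero_ennreal)
    fix e :: real
    assume e: "0 < e"
    then have "\<forall>\<^sub>F k in sequentially. lp_integral p (h k) < ennreal (e powr p)"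
      by (intro order_tendstoD(2)[OF lim]) simp
    then show "\<forall>\<^sub>F k in sequentially. lp_norm p (h k) < ennreal e"
      by eventually_elim (simp add: lp_norm_less_iff[OF assms e])
  qed
qed

lemma lp_integral_add3_le:
  assumes "0 \<le> p" and [measurable]: "a \<in> borel_measurable lebesgue" "b \<in> borel_measurable lebesgue"
    "c \<in> borel_measurable lebesgue"
  shows "lp_integral p (\<lambda>x. a x + b x + c x)
    \<le> ennreal (3 powr p) * (lp_integral p a + lp_integral p b + lp_integral p c)"
proof -
  have "lp_integral p (\<lambda>x. a x + b x + c x)
      \<le> (\<integral>\<^sup>+x. ennreal (3 powr p * (\<bar>a x\<bar> powr p + \<bar>b x\<bar> powr p + \<bar>c x\<bar> powr p)) \<partial>lebesgue)"
    unfolding lp_integral_def using assms(1)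
    by (intro nn_integral_mono ennreal_leI abs_sum3_powr_le)
  also have "\<dots> = (\<integral>\<^sup>+x. ennreal (3 powr p) *
      (ennreal (\<bar>a x\<bar> powr p) + ennreal (\<bar>b x\<bar> powr p) + ennreal (\<bar>c x\<bar> powr p)) \<partial>lebesgue)"
    by (intro nn_integral_cong) (simp add: ennreal_mult)
  also have "\<dots> = ennreal (3 powr p) * (lp_integral p a + lp_integral p b + lp_integral p c)"
    unfolding lp_integral_def
    by (simp add: nn_integral_cmult nn_integral_add)
  finally show ?thesis .
qed

lemma lp_integral_powr_diff_le:
  assumes "1 \<le> p" "0 < d" "d \<le> 1"
    and [measurable]: "f \<in> borel_measurable lebesgue" "g \<in> borel_measurable lebesgue"
    and "\<And>x. 0 \<le> f x" "\<And>x. 0 \<le> g x"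
  shows "lp_integral 1 (\<lambda>x. f x powr p - g x powr p)
    \<le> ennreal ((1 + d) powr p - (1 - d) powr p) * lp_integral p f
      + ennreal ((1 + 1 / d) powr p) * lp_integral p (\<lambda>x. g x - f x)"
proof -
  have spread: "0 \<le> (1 + d) powr p - (1 - d) powr p"
    using assms by (simp add: powr_mono2)
  have "lp_integral 1 (\<lambda>x. f x powr p - g x powr p)
      \<le> (\<integral>\<^sup>+x. ennreal (((1 + d) powr p - (1 - d) powr p) * f x powr p
          + (1 + 1 / d) powr p * \<bar>g x - f x\<bar> powr p) \<partial>lebesgue)"
    unfolding lp_integral_def using assms
    by (intro nn_integral_mono ennreal_leI) (simp add: abs_powr_diff_le)
  also have "\<dots> = (\<integral>\<^sup>+x. ennreal ((1 + d) powr p - (1 - d) powr p) * ennreal (\<bar>f x\<bar> powr p)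
      + ennreal ((1 + 1 / d) powr p) * ennreal (\<bar>g x - f x\<bar> powr p) \<partial>lebesgue)"
    using spread assms(6) by (intro nn_integral_cong) (simp add: ennreal_mult)
  also have "\<dots> = ennreal ((1 + d) powr p - (1 - d) powr p) * lp_integral p f
      + ennreal ((1 + 1 / d) powr p) * lp_integral p (\<lambda>x. g x - f x)"
    unfolding lp_integral_def
    by (simp add: nn_integral_cmult nn_integral_add)
  finally show ?thesis .
qed

lemma sets_lebesgue_Collect_less:
  fixes u :: "'a::euclidean_space \<Rightarrow> real"
  assumes [measurable]: "u \<in> borel_measurable lebesgue"
  shows "{x. t < u x} \<in> sets lebesgue"
proof -
  have "{x\<in>space lebesgue. t < u x} \<in> sets lebesgue" by measurable
  then show ?thesis by simp
qed

lemma V_classD: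
  assumes "f \<in> V_class"
  shows "f \<in> borel_measurable lebesgue" "0 \<le> f x" "0 < t \<Longrightarrow> emeasure lebesgue {x. t < f x} < \<infinity>"
  using assms unfolding V_class_def by auto

lemma V_class_min:
  assumes f: "f \<in> V_class" and g: "g \<in> V_class"
  shows "(\<lambda>x. min (f x) (g x)) \<in> V_class"
proof -
  note [measurable] = V_classD(1)[OF f] V_classD(1)[OF g]
  have "emeasure lebesgue {x. t < min (f x) (g x)} < \<infinity>" if "0 < t" for t
  proof -
    have "emeasure lebesgue {x. t < min (f x) (g x)} \<le> emeasure lebesgue {x. t < f x}"
      by (intro emeasure_mono sets_lebesgue_Collect_less) auto
    with V_classD(3)[OF f that] show ?thesis by order
  qed
  then show ?thesis using V_classD(2)[OF f] V_classD(2)[OF g] unfolding V_class_def by auto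
qed

lemma V_class_max:
  assumes f: "f \<in> V_class" and g: "g \<in> V_class"
  shows "(\<lambda>x. max (f x) (g x)) \<in> V_class"
proof -
  note [measurable] = V_classD(1)[OF f] V_classD(1)[OF g]
  have "emeasure lebesgue {x. t < max (f x) (g x)} < \<infinity>" if "0 < t" for t
  proof -
    have "emeasure lebesgue {x. t < max (f x) (g x)}
        = emeasure lebesgue ({x. t < f x} \<union> {x. t < g x})"
      by (rule arg_cong[where f = "emeasure lebesgue"]) auto
    also have "\<dots> \<le> emeasure lebesgue {x. t < f x} + emeasure lebesgue {x. t < g x}"
      by (intro emeasure_subadditive sets_lebesgue_Collect_less V_classD(1) f g)
    also have "\<dots> < \<infinity>"
      using V_classD(3)[OF f that] V_classD(3)[OF g that] by (simp add: less_top[symmetric])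
    finally show ?thesis .
  qed
  then show ?thesis using V_classD(2)[OF f] unfolding V_class_def by (auto intro: max.coboundedI1)
qed

lemma Lp_plusD:
  assumes "f \<in> Lp_plus p"
  shows "f \<in> borel_measurable lebesgue" "0 \<le> f x" "lp_integral p f \<noteq> \<infinity>"
  using assms unfolding Lp_plus_def by (auto simp: lp_norm_eq_lp_integral split: if_splits)

lemma Lp_plus_subset_V_class:
  assumes "0 < p"
  shows "Lp_plus p \<subseteq> V_class"
proof
  fix f :: "'a \<Rightarrow> real"
  assume f: "f \<in> Lp_plus p"
  note [measurable] = Lp_plusD(1)[OF f]
  have "emeasure lebesgue {x. t < f x} < \<infinity>" if t: "0 < t" for t
  proof -
    have "ennreal (t powr p) * emeasure lebesgue {x. t < f x}
        = (\<integral>\<^sup>+x. ennreal (t powr p) * indicator {x. t < f x} x \<partial>lebesgue)"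
      by (simp add: sets_lebesgue_Collect_less nn_integral_cmult_indicator)
    also have "\<dots> \<le> lp_integral p f"
      unfolding lp_integral_def using t assms
      by (intro nn_integral_mono) (auto simp: indicator_def intro!: ennreal_leI powr_mono2)
    also have "\<dots> < \<infinity>" using Lp_plusD(3)[OF f] by (simp add: less_top)
    finally show ?thesis using t by (auto simp: ennreal_mult_less_top)
  qed
  then show "f \<in> V_class" using Lp_plusD(1,2)[OF f] unfolding V_class_def by auto
qed

lemma rearrangementD:
  assumes "rearrangement S" "f \<in> V_class"
  shows "S f \<in> V_class" "emeasure lebesgue {x. t < S f x} = emeasure lebesgue {x. t < f x}"
    "g \<in> V_class \<Longrightarrow> AE x in lebesgue. f x \<le> g x \<Longrightarrow> AE x in lebesgue. S f x \<le> S g x"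
  using assms unfolding rearrangement_def by auto

lemma rearrangement_comp:
  assumes A: "rearrangement A" and B: "rearrangement B"
  shows "rearrangement (A \<circ> B)"
  unfolding rearrangement_def
  using rearrangementD[OF A] rearrangementD[OF B] by (simp add: rearrangementD[OF B])

lemma rearrangement_comp_upto:
  assumes "\<And>k. rearrangement (S k)"
  shows "rearrangement (comp_upto S k)"
proof (induction k)
  case 0
  then show ?case by (simp add: assms)
next
  case (Suc k)
  then show ?case unfolding comp_upto.simps by (rule rearrangement_comp[OF assms])
qed

lemma rearrangement_nn_integral_powr:
  assumes "rearrangement S" "h \<in> V_class" "0 < p"
  shows "(\<integral>\<^sup>+x. ennreal (S h x powr p) \<partial>lebesgue) = (\<integral>\<^sup>+x. ennreal (h x powr p) \<partial>lebesgue)"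
  using assms sigma_finite_lebesgue
  by (intro nn_integral_powr_eq_if_equimeasurable)
    (simp_all add: rearrangementD V_classD)

lemma nn_integral_eq_add_diff:
  assumes [measurable]: "u \<in> borel_measurable M" "v \<in> borel_measurable M"
    and "AE x in M. 0 \<le> u x \<and> u x \<le> v x"
  shows "(\<integral>\<^sup>+x. ennreal (v x) \<partial>M) = (\<integral>\<^sup>+x. ennreal (u x) \<partial>M) + (\<integral>\<^sup>+x. ennreal (v x - u x) \<partial>M)"
proof -
  have "AE x in M. ennreal (v x) = ennreal (u x) + ennreal (v x - u x)"
    using assms(3) by eventually_elim (simp flip: ennreal_plus)
  then have "(\<integral>\<^sup>+x. ennreal (v x) \<partial>M) = (\<integral>\<^sup>+x. ennreal (u x) + ennreal (v x - u x) \<partial>M)"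
    by (rule nn_integral_cong_AE)
  also have "\<dots> = (\<integral>\<^sup>+x. ennreal (u x) \<partial>M) + (\<integral>\<^sup>+x. ennreal (v x - u x) \<partial>M)"
    by (rule nn_integral_add) measurable
  finally show ?thesis .
qed

lemma rearrangement_nn_integral_powr_diff:
  assumes p: "0 < p" and S: "rearrangement S" and u: "u \<in> V_class" and v: "v \<in> V_class"
    and le: "\<And>x. u x \<le> v x" and fin: "(\<integral>\<^sup>+x. ennreal (u x powr p) \<partial>lebesgue) \<noteq> \<infinity>"
  shows "(\<integral>\<^sup>+x. ennreal (S v x powr p - S u x powr p) \<partial>lebesgue)
    = (\<integral>\<^sup>+x. ennreal (v x powr p - u x powr p) \<partial>lebesgue)"
proof -
  note V = u v rearrangementD(1)[OF S u] rearrangementD(1)[OF S v]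
  note [measurable] = V[THEN V_classD(1)]
  have "AE x in lebesgue. S u x \<le> S v x"
    using le by (intro rearrangementD(3)[OF S u v]) simp
  then have "AE x in lebesgue. 0 \<le> S u x powr p \<and> S u x powr p \<le> S v x powr p"
    by eventually_elim (use p V in \<open>simp add: V_classD(2) powr_mono2\<close>)
  then have Sv_split: "(\<integral>\<^sup>+x. ennreal (S v x powr p) \<partial>lebesgue)
      = (\<integral>\<^sup>+x. ennreal (S u x powr p) \<partial>lebesgue)
        + (\<integral>\<^sup>+x. ennreal (S v x powr p - S u x powr p) \<partial>lebesgue)"
    by (intro nn_integral_eq_add_diff) measurable
  have "AE x in lebesgue. 0 \<le> u x powr p \<and> u x powr p \<le> v x powr p"
    using p V le by (intro AE_I2) (simp add: V_classD(2) powr_mono2)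
  then have v_split: "(\<integral>\<^sup>+x. ennreal (v x powr p) \<partial>lebesgue)
      = (\<integral>\<^sup>+x. ennreal (u x powr p) \<partial>lebesgue)
        + (\<integral>\<^sup>+x. ennreal (v x powr p - u x powr p) \<partial>lebesgue)"
    by (intro nn_integral_eq_add_diff) measurable
  have "(\<integral>\<^sup>+x. ennreal (u x powr p) \<partial>lebesgue)
        + (\<integral>\<^sup>+x. ennreal (S v x powr p - S u x powr p) \<partial>lebesgue)
      = (\<integral>\<^sup>+x. ennreal (S u x powr p) \<partial>lebesgue)
        + (\<integral>\<^sup>+x. ennreal (S v x powr p - S u x powr p) \<partial>lebesgue)"
    by (simp only: rearrangement_nn_integral_powr[OF S u p])
  also have "\<dots> = (\<integral>\<^sup>+x. ennreal (S v x powr p) \<partial>lebesgue)"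
    by (rule Sv_split[symmetric])
  also have "\<dots> = (\<integral>\<^sup>+x. ennreal (v x powr p) \<partial>lebesgue)"
    by (rule rearrangement_nn_integral_powr[OF S v p])
  finally show ?thesis
    unfolding v_split using fin by (simp only: ennreal_add_left_cancel simp_thms)
qed

lemma rearrangement_lp_integral_diff_le:
  fixes f g :: "'a::euclidean_space \<Rightarrow> real"
  assumes p: "1 \<le> p" and S: "rearrangement S" and f: "f \<in> V_class" and g: "g \<in> V_class"
    and fin: "lp_integral p f \<noteq> \<infinity>"
  shows "lp_integral p (\<lambda>x. S f x - S g x) \<le> lp_integral 1 (\<lambda>x. f x powr p - g x powr p)"
proof -
  define m where "m = (\<lambda>x. min (f x) (g x))"
  define M where "M = (\<lambda>x. max (f x) (g x))"
  have mV: "m \<in> V_class" and MV: "M \<in> V_class"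
    unfolding m_def M_def using f g by (simp_all add: V_class_min V_class_max)
  note V = f g mV MV
  have nonneg: "0 \<le> f x" "0 \<le> g x" "0 \<le> S m x" for x
    using V rearrangementD(1)[OF S mV] by (simp_all add: V_classD(2))
  have "AE x in lebesgue. S m x \<le> S f x" "AE x in lebesgue. S m x \<le> S g x"
    "AE x in lebesgue. S f x \<le> S M x" "AE x in lebesgue. S g x \<le> S M x"
    by (intro rearrangementD(3)[OF S] V AE_I2; simp add: m_def M_def)+
  then have "AE x in lebesgue. \<bar>S f x - S g x\<bar> powr p \<le> S M x powr p - S m x powr p"
  proof eventually_elim
    case (elim x)
    then have "\<bar>S f x - S g x\<bar> powr p \<le> (S M x - S m x) powr p"
      using p by (intro powr_mono2) auto
    also have "\<dots> \<le> S M x powr p - S m x powr p"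
      using elim nonneg(3)[of x] p by (intro powr_diff_le_diff_powr) auto
    finally show ?case .
  qed
  then have "lp_integral p (\<lambda>x. S f x - S g x)
      \<le> (\<integral>\<^sup>+x. ennreal (S M x powr p - S m x powr p) \<partial>lebesgue)"
    unfolding lp_integral_def
    by (intro nn_integral_mono_AE) (auto elim!: eventually_mono intro: ennreal_leI)
  also have "\<dots> = (\<integral>\<^sup>+x. ennreal (M x powr p - m x powr p) \<partial>lebesgue)"
  proof (rule rearrangement_nn_integral_powr_diff[OF _ S mV MV])
    have "(\<integral>\<^sup>+x. ennreal (m x powr p) \<partial>lebesgue) \<le> lp_integral p f"
      unfolding lp_integral_def using nonneg p
      by (intro nn_integral_mono ennreal_leI) (auto simp: m_def intro: powr_mono2)
    with fin show "(\<integral>\<^sup>+x. ennreal (m x powr p) \<partial>lebesgue) \<noteq> \<infinity>"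
      by (auto simp: top_unique)
  qed (use p in \<open>auto simp: m_def M_def\<close>)
  also have "\<dots> = lp_integral 1 (\<lambda>x. f x powr p - g x powr p)"
    unfolding lp_integral_def
  proof (intro nn_integral_cong)
    fix x
    show "ennreal (M x powr p - m x powr p) = ennreal (\<bar>f x powr p - g x powr p\<bar> powr 1)"
      using nonneg[of x] p powr_mono2[of p "f x" "g x"] powr_mono2[of p "g x" "f x"]
      by (cases "f x \<le> g x") (auto simp: m_def M_def)
  qed
  finally show ?thesis .
qed

lemma rearrangement_error_le:
  fixes f g :: "'a::euclidean_space \<Rightarrow> real"
  assumes p: "1 \<le> p" and R: "rearrangement R" and T: "rearrangement T"
    and f: "f \<in> Lp_plus p" and g: "g \<in> Lp_plus p"
  shows "lp_integral p (\<lambda>x. R f x - T f x) \<le> ennreal (3 powr p) *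
    (lp_integral p (\<lambda>x. R g x - T g x) + 2 * lp_integral 1 (\<lambda>x. f x powr p - g x powr p))"
proof -
  have fV: "f \<in> V_class" and gV: "g \<in> V_class"
    using Lp_plus_subset_V_class[of p] f g p by auto
  note RT_V = rearrangementD(1)[OF R fV] rearrangementD(1)[OF R gV]
    rearrangementD(1)[OF T fV] rearrangementD(1)[OF T gV]
  note [measurable] = RT_V[THEN V_classD(1)]
  define E where "E = lp_integral 1 (\<lambda>x. f x powr p - g x powr p)"
  have "lp_integral p (\<lambda>x. R f x - R g x) \<le> E"
    unfolding E_def using p R fV gV Lp_plusD(3)[OF f] by (rule rearrangement_lp_integral_diff_le)
  moreover have "lp_integral p (\<lambda>x. T g x - T f x) \<le> E"
    using rearrangement_lp_integral_diff_le[OF p T gV fV Lp_plusD(3)[OF g]]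
    by (simp add: E_def lp_integral_def abs_minus_commute)
  ultimately have "lp_integral p (\<lambda>x. R f x - R g x) + lp_integral p (\<lambda>x. R g x - T g x)
      + lp_integral p (\<lambda>x. T g x - T f x) \<le> lp_integral p (\<lambda>x. R g x - T g x) + 2 * E"
    by (simp add: mult_2 add_mono add.commute add.left_commute)
  moreover have "lp_integral p (\<lambda>x. R f x - T f x) \<le> ennreal (3 powr p) *
      (lp_integral p (\<lambda>x. R f x - R g x) + lp_integral p (\<lambda>x. R g x - T g x)
        + lp_integral p (\<lambda>x. T g x - T f x))"
    using lp_integral_add3_le[of p "\<lambda>x. R f x - R g x" "\<lambda>x. R g x - T g x" "\<lambda>x. T g x - T f x"] p
    by simp
  ultimately show ?thesis unfolding E_def by (meson order.trans mult_left_mono zero_le)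
qed

lemma tendsto_lp_integral_powr_diff:
  fixes f :: "'a::euclidean_space \<Rightarrow> real"
  assumes p: "1 \<le> p" and f: "f \<in> Lp_plus p" and g: "\<And>j. g j \<in> Lp_plus p"
    and lim: "(\<lambda>j. lp_integral p (\<lambda>x. g j x - f x)) \<longlonglongrightarrow> 0"
  shows "(\<lambda>j. lp_integral 1 (\<lambda>x. f x powr p - g j x powr p)) \<longlonglongrightarrow> 0"
proof (rule tendsto_zero_ennreal)
  fix e :: real
  assume e: "0 < e"
  obtain A where A: "lp_integral p f = ennreal A" "0 \<le> A"
    using Lp_plusD(3)[OF f] by (cases "lp_integral p f" rule: ennreal_cases) auto
  define c where "c d = (1 + d) powr p - (1 - d) powr p" for d
  have "((\<lambda>d. c d * A) \<longlongrightarrow> c 0 * A) (at_right 0)"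
    unfolding c_def by (intro tendsto_intros) auto
  then have "\<forall>\<^sub>F d in at_right 0. c d * A < e"
    using e by (intro order_tendstoD(2)) (auto simp: c_def)
  moreover have "\<forall>\<^sub>F d in at_right (0::real). 0 < d \<and> d \<le> 1"
    unfolding eventually_at_right_field by (intro exI[of _ 1]) auto
  ultimately have "\<forall>\<^sub>F d in at_right 0. 0 < d \<and> d \<le> 1 \<and> c d * A < e"
    by eventually_elim auto
  then obtain d where d: "0 < d" "d \<le> 1" and small: "c d * A < e"
    using eventually_happens'[of "at_right (0::real)"] by auto
  have "0 \<le> c d" using d p by (simp add: c_def powr_mono2)
  then have "ennreal (c d) * lp_integral p f + ennreal ((1 + 1 / d) powr p) * 0 < ennreal e"
    using A small by (simp add: ennreal_mult[symmetric] ennreal_less_iff)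
  moreover have "(\<lambda>j. ennreal (c d) * lp_integral p f
        + ennreal ((1 + 1 / d) powr p) * lp_integral p (\<lambda>x. g j x - f x))
      \<longlonglongrightarrow> ennreal (c d) * lp_integral p f + ennreal ((1 + 1 / d) powr p) * 0"
    by (intro tendsto_add tendsto_const ennreal_tendsto_cmult lim) simp
  ultimately have "\<forall>\<^sub>F j in sequentially.
      ennreal (c d) * lp_integral p f
        + ennreal ((1 + 1 / d) powr p) * lp_integral p (\<lambda>x. g j x - f x) < ennreal e"
    by (simp add: order_tendstoD(2))
  then show "\<forall>\<^sub>F j in sequentially. lp_integral 1 (\<lambda>x. f x powr p - g j x powr p) < ennreal e"
  proof eventually_elim
    case (elim j)
    show ?case
      using lp_integral_powr_diff_le[OF p d, of f "g j"] Lp_plusD[OF f] Lp_plusD[OF g] elim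
      unfolding c_def by (auto intro: le_less_trans)
  qed
qed

lemma rearrangement_error_transfer:
  fixes f :: "'a::euclidean_space \<Rightarrow> real"
  assumes p: "1 \<le> p" and T: "rearrangement T" and f: "f \<in> Lp_plus p" and g: "\<And>j. g j \<in> Lp_plus p"
    and lim: "(\<lambda>j. lp_integral p (\<lambda>x. g j x - f x)) \<longlonglongrightarrow> 0" and e: "0 < e"
  obtains \<delta> j where "0 < \<delta>"
    and "\<And>R. rearrangement R \<Longrightarrow> lp_integral p (\<lambda>x. R (g j) x - T (g j) x) < ennreal \<delta>
      \<Longrightarrow> lp_integral p (\<lambda>x. R f x - T f x) < ennreal e"
proof -
  define \<delta> where "\<delta> = e / (4 * 3 powr p)"
  have \<delta>: "0 < \<delta>" "3 powr p * (3 * \<delta>) < e" using e by (simp_all add: \<delta>_def)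
  have "\<forall>\<^sub>F j in sequentially. lp_integral 1 (\<lambda>x. f x powr p - g j x powr p) < ennreal \<delta>"
    using \<delta> by (intro order_tendstoD(2)[OF tendsto_lp_integral_powr_diff[OF p f g lim]]) simp
  then obtain j where j: "lp_integral 1 (\<lambda>x. f x powr p - g j x powr p) < ennreal \<delta>"
    using eventually_happens'[of sequentially] by auto
  show thesis
  proof (rule that[OF \<delta>(1)])
    fix R
    assume R: "rearrangement R" and close: "lp_integral p (\<lambda>x. R (g j) x - T (g j) x) < ennreal \<delta>"
    have "lp_integral p (\<lambda>x. R f x - T f x) \<le> ennreal (3 powr p) *
        (lp_integral p (\<lambda>x. R (g j) x - T (g j) x)
          + 2 * lp_integral 1 (\<lambda>x. f x powr p - g j x powr p))"
      using p R T f g by (rule rearrangement_error_le)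
    also have "\<dots> \<le> ennreal (3 powr p) * ennreal (3 * \<delta>)"
    proof (intro mult_left_mono)
      have "lp_integral p (\<lambda>x. R (g j) x - T (g j) x)
          + 2 * lp_integral 1 (\<lambda>x. f x powr p - g j x powr p) \<le> ennreal \<delta> + ennreal (2 * \<delta>)"
        using less_imp_le[OF close] less_imp_le[OF j] \<delta>
        by (intro add_mono) (auto simp: ennreal_mult mult_left_mono)
      also have "\<dots> = ennreal (3 * \<delta>)"
        using \<delta> by (subst ennreal_plus[symmetric]) auto
      finally show "lp_integral p (\<lambda>x. R (g j) x - T (g j) x)
          + 2 * lp_integral 1 (\<lambda>x. f x powr p - g j x powr p) \<le> ennreal (3 * \<delta>)" .
    qed simp
    also have "\<dots> < ennreal e"
      using \<delta> by (simp add: ennreal_mult[symmetric] ennreal_less_iff)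
    finally show "lp_integral p (\<lambda>x. R f x - T f x) < ennreal e" .
  qed
qed

lemma Lp_closureE:
  assumes "0 < p" "f \<in> Lp_closure p X"
  obtains g where "f \<in> Lp_plus p" "\<And>k. g k \<in> X" "(\<lambda>k. lp_integral p (\<lambda>x. g k x - f x)) \<longlonglongrightarrow> 0"
  using assms unfolding Lp_closure_def by (auto simp: tendsto_lp_norm_zero_iff)

lemma subset_Lp_closure:
  assumes "0 < p" "X \<subseteq> Lp_plus p"
  shows "X \<subseteq> Lp_closure p X"
proof
  fix f
  assume "f \<in> X"
  moreover have "lp_norm p (\<lambda>x. f x - f x) = 0"
    using assms(1) by (simp add: lp_norm_def)
  ultimately show "f \<in> Lp_closure p X"
    using assms(2) unfolding Lp_closure_def by (auto intro!: exI[of _ "\<lambda>k. f"])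
qed

lemma choice_tendsto_zero_ennreal:
  fixes \<phi> :: "'b \<Rightarrow> ennreal"
  assumes "\<And>e. 0 < e \<Longrightarrow> \<exists>x\<in>A. \<phi> x < ennreal e"
  obtains s where "\<And>k. s k \<in> A" "(\<lambda>k. \<phi> (s k)) \<longlonglongrightarrow> 0"
proof -
  have "\<forall>k. \<exists>x. x \<in> A \<and> \<phi> x < ennreal (inverse (real (Suc k)))"
  proof
    fix k :: nat
    have "0 < inverse (real (Suc k))" by simp
    then show "\<exists>x. x \<in> A \<and> \<phi> x < ennreal (inverse (real (Suc k)))"
      using assms by blast
  qed
  then have "\<exists>s. \<forall>k. s k \<in> A \<and> \<phi> (s k) < ennreal (inverse (real (Suc k)))"
    by (rule choice)
  then obtain s where s: "\<And>k. s k \<in> A" "\<And>k. \<phi> (s k) < ennreal (inverse (real (Suc k)))"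
    by blast
  have "(\<lambda>k. ennreal (inverse (real (Suc k)))) \<longlonglongrightarrow> 0"
    using tendsto_ennrealI[OF LIMSEQ_inverse_real_of_nat] by simp
  then have "(\<lambda>k. \<phi> (s k)) \<longlonglongrightarrow> 0"
    by (rule tendsto_sandwich[rotated 2, OF tendsto_const])
      (auto intro!: always_eventually less_imp_le[OF s(2)] simp del: of_nat_Suc)
  with s(1) show thesis by (rule that)
qed

lemma tendsto_lp_norm_Lp_closure:
  assumes p: "1 \<le> p" and X: "X \<subseteq> Lp_plus p" and T: "rearrangement T"
    and R: "\<And>k. rearrangement (R k)"
    and approx: "\<And>g. g \<in> X \<Longrightarrow> (\<lambda>k. lp_norm p (\<lambda>x. R k g x - T g x)) \<longlonglongrightarrow> 0"
    and f: "f \<in> Lp_closure p X"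
  shows "(\<lambda>k. lp_norm p (\<lambda>x. R k f x - T f x)) \<longlonglongrightarrow> 0"
proof -
  have p0: "0 < p" using p by simp
  obtain g where f': "f \<in> Lp_plus p" and gX: "\<And>j. g j \<in> X"
    and lim: "(\<lambda>j. lp_integral p (\<lambda>x. g j x - f x)) \<longlonglongrightarrow> 0"
    using Lp_closureE[OF p0 f] by blast
  have g: "\<And>j. g j \<in> Lp_plus p" using gX X by blast
  show ?thesis unfolding tendsto_lp_norm_zero_iff[OF p0]
  proof (rule tendsto_zero_ennreal)
    fix e :: real
    assume "0 < e"
    then obtain \<delta> :: real and j where "0 < \<delta>" and transfer: "\<And>R. rearrangement R
        \<Longrightarrow> lp_integral p (\<lambda>x. R (g j) x - T (g j) x) < ennreal \<delta>
        \<Longrightarrow> lp_integral p (\<lambda>x. R f x - T f x) < ennreal e"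
      using rearrangement_error_transfer[OF p T f' g lim] by blast
    have "(\<lambda>k. lp_integral p (\<lambda>x. R k (g j) x - T (g j) x)) \<longlonglongrightarrow> 0"
      using approx[OF gX[of j]] by (simp add: tendsto_lp_norm_zero_iff[OF p0])
    moreover have "0 < ennreal \<delta>" using \<open>0 < \<delta>\<close> by simp
    ultimately have "\<forall>\<^sub>F k in sequentially. lp_integral p (\<lambda>x. R k (g j) x - T (g j) x) < ennreal \<delta>"
      by (rule order_tendstoD(2))
    then show "\<forall>\<^sub>F k in sequentially. lp_integral p (\<lambda>x. R k f x - T f x) < ennreal e"
      by eventually_elim (rule transfer[OF R])
  qed
qed

lemma approximable_Lp_closure:
  assumes "1 \<le> p" "X \<subseteq> Lp_plus p" "rearrangement T" "\<forall>S\<in>W. rearrangement S"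
    and "approximable p X W T"
  shows "approximable p (Lp_closure p X) W T"
proof -
  obtain R where RW: "\<forall>k. R k \<in> W"
    and approx: "\<forall>g\<in>X. (\<lambda>k. lp_norm p (\<lambda>x. R k g x - T g x)) \<longlonglongrightarrow> 0"
    using assms(5) unfolding approximable_def by blast
  have "\<And>k. rearrangement (R k)" using RW assms(4) by blast
  then have "(\<lambda>k. lp_norm p (\<lambda>x. R k f x - T f x)) \<longlonglongrightarrow> 0" if "f \<in> Lp_closure p X" for f
    by (rule tendsto_lp_norm_Lp_closure[OF assms(1-3)]) (use approx that in auto)
  with RW show ?thesis unfolding approximable_def by blast
qed

lemma sequentially_approximable_Lp_closure:
  assumes "1 \<le> p" "X \<subseteq> Lp_plus p" "rearrangement T" "\<forall>S\<in>W. rearrangement S"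
    and "sequentially_approximable p X W T"
  shows "sequentially_approximable p (Lp_closure p X) W T"
proof -
  obtain S where SW: "\<forall>k. S k \<in> W"
    and approx: "\<forall>g\<in>X. (\<lambda>k. lp_norm p (\<lambda>x. comp_upto S k g x - T g x)) \<longlonglongrightarrow> 0"
    using assms(5) unfolding sequentially_approximable_def by blast
  have "\<And>k. rearrangement (comp_upto S k)"
    using SW assms(4) by (intro rearrangement_comp_upto) blast
  then have "(\<lambda>k. lp_norm p (\<lambda>x. comp_upto S k f x - T f x)) \<longlonglongrightarrow> 0" if "f \<in> Lp_closure p X" for f
    by (rule tendsto_lp_norm_Lp_closure[OF assms(1-3)]) (use approx that in auto)
  with SW show ?thesis unfolding sequentially_approximable_def by blast
qed

lemma ex_approximant_close_at_Lp_closure: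
  assumes p: "1 \<le> p" and X: "X \<subseteq> Lp_plus p" and T: "rearrangement T"
    and W: "\<forall>S\<in>W. rearrangement S" and approx: "weakly_approximable p X W T"
    and f: "f \<in> Lp_closure p X" and e: "0 < e"
  shows "\<exists>R\<in>W. lp_integral p (\<lambda>x. R f x - T f x) < ennreal e"
proof -
  have p0: "0 < p" using p by simp
  obtain g where f': "f \<in> Lp_plus p" and gX: "\<And>j. g j \<in> X"
    and lim: "(\<lambda>j. lp_integral p (\<lambda>x. g j x - f x)) \<longlonglongrightarrow> 0"
    using Lp_closureE[OF p0 f] by blast
  have g: "\<And>j. g j \<in> Lp_plus p" using gX X by blast
  obtain \<delta> :: real and j where "0 < \<delta>" and transfer: "\<And>R. rearrangement R
      \<Longrightarrow> lp_integral p (\<lambda>x. R (g j) x - T (g j) x) < ennreal \<delta>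
      \<Longrightarrow> lp_integral p (\<lambda>x. R f x - T f x) < ennreal e"
    using rearrangement_error_transfer[OF p T f' g lim e] by blast
  obtain R where RW: "\<forall>k. R k \<in> W"
    and "(\<lambda>k. lp_norm p (\<lambda>x. R k (g j) x - T (g j) x)) \<longlonglongrightarrow> 0"
    using approx gX unfolding weakly_approximable_def by blast
  then have "(\<lambda>k. lp_integral p (\<lambda>x. R k (g j) x - T (g j) x)) \<longlonglongrightarrow> 0"
    by (simp add: tendsto_lp_norm_zero_iff[OF p0])
  moreover have "0 < ennreal \<delta>" using \<open>0 < \<delta>\<close> by simp
  ultimately have "\<forall>\<^sub>F k in sequentially. lp_integral p (\<lambda>x. R k (g j) x - T (g j) x) < ennreal \<delta>"
    by (rule order_tendstoD(2))
  then obtain k where close: "lp_integral p (\<lambda>x. R k (g j) x - T (g j) x) < ennreal \<delta>"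
    using eventually_happens'[of sequentially] by auto
  have "R k \<in> W" using RW by blast
  moreover from this have "rearrangement (R k)" using W by blast
  ultimately show ?thesis using transfer[of "R k"] close by blast
qed

lemma weakly_approximable_Lp_closure:
  assumes "1 \<le> p" "X \<subseteq> Lp_plus p" "rearrangement T" "\<forall>S\<in>W. rearrangement S"
    and "weakly_approximable p X W T"
  shows "weakly_approximable p (Lp_closure p X) W T"
  unfolding weakly_approximable_def
proof
  fix f
  assume "f \<in> Lp_closure p X"
  then obtain R where "\<And>k. R k \<in> W" "(\<lambda>k. lp_integral p (\<lambda>x. R k f x - T f x)) \<longlonglongrightarrow> 0"
    using choice_tendsto_zero_ennreal[where \<phi> = "\<lambda>R. lp_integral p (\<lambda>x. R f x - T f x)"]
      ex_approximant_close_at_Lp_closure[OF assms] by blast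
  then show "\<exists>R. (\<forall>k. R k \<in> W) \<and> (\<lambda>k. lp_norm p (\<lambda>x. R k f x - T f x)) \<longlonglongrightarrow> 0"
    using assms(1) by (auto simp: tendsto_lp_norm_zero_iff)
qed

theorem lemma5p1:
  fixes p :: real
    and X :: "('a::euclidean_space \<Rightarrow> real) set"
    and T :: "('a \<Rightarrow> real) \<Rightarrow> ('a \<Rightarrow> real)"
    and W :: "(('a \<Rightarrow> real) \<Rightarrow> ('a \<Rightarrow> real)) set"
  assumes "1 \<le> p"
    and "X \<subseteq> Lp_plus p"
    and "rearrangement T"
    and "\<forall>S\<in>W. rearrangement S"
  shows "(weakly_approximable p X W T \<longleftrightarrow> weakly_approximable p (Lp_closure p X) W T)
       \<and> (approximable p X W T \<longleftrightarrow> approximable p (Lp_closure p X) W T)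
       \<and> (sequentially_approximable p X W T \<longleftrightarrow> sequentially_approximable p (Lp_closure p X) W T)"
proof -
  have "X \<subseteq> Lp_closure p X"
    using assms(1,2) by (intro subset_Lp_closure) auto
  then have "weakly_approximable p (Lp_closure p X) W T \<Longrightarrow> weakly_approximable p X W T"
      and "approximable p (Lp_closure p X) W T \<Longrightarrow> approximable p X W T"
      and "sequentially_approximable p (Lp_closure p X) W T \<Longrightarrow> sequentially_approximable p X W T"
    by (simp_all only: weakly_approximable_def approximable_def sequentially_approximable_def)
      blast+
  with weakly_approximable_Lp_closure[OF assms] approximable_Lp_closure[OF assms]
    sequentially_approximable_Lp_closure[OF assms]
  show ?thesis by blast
qed

end
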